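(* Let $n\ge1$, $q$ a prime power, $s\in\mathbb{F}_q$, and let $(\mathsf{Enc},\mathcal{A})$ be an $n$-party one-round aggregation protocol over $\mathbb{F}_q$ with encoder $\mathsf{Enc}:\mathbb{F}_q\to[\ell]^m$. For every $\mathbf{y}\in[\ell]^{nm}$, the set $\mathrm{Inv}_{\mathbf{y}}=\{\mathbf{x}\in\mathcal{B}_s:\Pr_{Y\sim\mathcal{S}^{\mathsf{Enc}}_{\mathbf{x}}}[Y=\mathbf{y}]>0\}$ satisfies $|\mathrm{Inv}_{\mathbf{y}}|\le n^{nm}$.
   Context: $\mathcal{B}_s=\{\mathbf{x}\in\mathbb{F}_q^n:\sum_ix_i=s\}$. An $n$-party one-round aggregation protocol over $\mathbb{F}_q$ with $m$ messages per party consists of a randomized encoder $\mathsf{Enc}:\mathbb{F}_q\to[\ell]^m$ (for some positive integer $\ell$; each party applies it to its input with independent randomness) and an analyzer $\mathcal{A}:[\ell]^{nm}\to\mathbb{F}_q$ such that for every $\mathbf{x}\in\mathbb{F}_q^n$, every possible realization of the encodings $\mathsf{Enc}(x_1),\dots,\mathsf{Enc}(x_n)$, and every permutation $\pi$ of $[nm]$, the analyzer applied to the concatenation $(\mathsf{Enc}(x_1),\dots,\mathsf{Enc}(x_n))$ with coordinates permuted by $\pi$ outputs $\sum_i x_i$. $\mathcal{S}^{\mathsf{Enc}}_{\mathbf{x}}$ is the distribution on $[\ell]^{nm}$ of this concatenation after applying an independent uniformly random permutation of the $nm$ coordinates. *)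

theory Defs
  imports "HOL-Probability.Probability"
begin

text \<open>Inputs x in F_q^n are lists of length n; messages in [l] = {1..l} are naturals;
  an encoding Enc(a) in [l]^m is a list of length m.  The randomized encoder is a pmf.\<close>

fun encs :: "('a \<Rightarrow> 'b list pmf) \<Rightarrow> 'a list \<Rightarrow> 'b list list pmf" where
  "encs E [] = return_pmf []"
| "encs E (x # xs) = bind_pmf (E x) (\<lambda>e. bind_pmf (encs E xs) (\<lambda>es. return_pmf (e # es)))"

definition permute_list_by :: "(nat \<Rightarrow> nat) \<Rightarrow> 'b list \<Rightarrow> 'b list" where
  "permute_list_by p w = map (\<lambda>i. w ! p i) [0..<length w]"

definition B_set :: "nat \<Rightarrow> 'a::comm_monoid_add \<Rightarrow> 'a list set" where
  "B_set n s = {x. length x = n \<and> sum_list x = s}"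

definition is_aggregation_protocol ::
  "nat \<Rightarrow> nat \<Rightarrow> nat \<Rightarrow> ('a::field \<Rightarrow> nat list pmf) \<Rightarrow> (nat list \<Rightarrow> 'a) \<Rightarrow> bool" where
  "is_aggregation_protocol n m l Enc A \<longleftrightarrow>
     (\<forall>a. \<forall>e \<in> set_pmf (Enc a). length e = m \<and> set e \<subseteq> {1..l}) \<and>
     (\<forall>x es p. length x = n \<longrightarrow> length es = n \<longrightarrow>
        (\<forall>i<n. es ! i \<in> set_pmf (Enc (x ! i))) \<longrightarrow>
        p permutes {0..<n*m} \<longrightarrow>
        A (permute_list_by p (concat es)) = sum_list x)"

definition shuffled :: "nat \<Rightarrow> nat \<Rightarrow> ('a \<Rightarrow> nat list pmf) \<Rightarrow> 'a list \<Rightarrow> nat list pmf" where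
  "shuffled n m Enc x =
     bind_pmf (encs Enc x) (\<lambda>es.
       bind_pmf (pmf_of_set {p. p permutes {0..<n*m}}) (\<lambda>p.
         return_pmf (permute_list_by p (concat es))))"

end

theory Submission
  imports Defs
begin

text \<open>Fix a view y and any input x that can produce it, together with encodings es of x whose
  messages are a rearrangement of y. Since the analyzer sees y no matter which of these
  encodings occurred, it is forced to output the sum of x. Consequently x is determined by the
  tuple of message multisets of its n parties: two inputs with the same tuple may exchange the
  encoding of any single party, which yields another explanation of y whose input differs from
  x in that coordinate only, with the same sum. So the inputs explaining y inject into the
  ordered splittings of the multiset of y into n parts, of which there are at most n^(nm)
  (assign every message of y to a party).\<close>

lemma sum_list_list_update:
  fixes xs :: "'a::comm_monoid_add list"
  assumes "k < length xs"
  shows "sum_list (xs[k := v]) + xs ! k = sum_list xs + v"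
  using assms
proof (induction xs arbitrary: k)
  case Nil then show ?case by simp
next
  case (Cons a xs) then show ?case by (cases k) (simp_all add: ac_simps)
qed

lemma mset_concat_list_update:
  assumes "k < length xss" and "mset v = mset (xss ! k)"
  shows "mset (concat (xss[k := v])) = mset (concat xss)"
  using assms
proof (induction xss arbitrary: k)
  case Nil then show ?case by simp
next
  case (Cons xs xss) then show ?case by (cases k) auto
qed

definition labelled_part :: "'b list \<Rightarrow> nat list \<Rightarrow> nat \<Rightarrow> 'b multiset" where
  "labelled_part ys g i = mset (map fst (filter (\<lambda>p. snd p = i) (zip ys g)))"

lemma labelled_part_Cons:
  "labelled_part (y # ys) (k # g) i =
     (if i = k then add_mset y (labelled_part ys g i) else labelled_part ys g i)"
  by (simp add: labelled_part_def)

lemma sum_list_eq_mset_imp_labelling: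
  fixes Ms :: "'b multiset list"
  assumes "sum_list Ms = mset ys"
  shows "\<exists>g. set g \<subseteq> {0..<length Ms} \<and> length g = length ys \<and>
             Ms = map (labelled_part ys g) [0..<length Ms]"
  using assms
proof (induction ys arbitrary: Ms)
  case Nil
  then have "\<forall>M \<in> set Ms. M = {#}" by (induction Ms) auto
  then have "Ms = map (labelled_part [] []) [0..<length Ms]"
    by (intro nth_equalityI) (auto simp: labelled_part_def)
  then show ?case by auto
next
  case (Cons y ys)
  have "y \<in># sum_list Ms" using Cons.prems by simp
  then have "\<exists>M \<in> set Ms. y \<in># M" by (induction Ms) auto
  then obtain k where k: "k < length Ms" "y \<in># Ms ! k" by (metis in_set_conv_nth)
  define Ms' where "Ms' = Ms[k := Ms ! k - {#y#}]"
  have "sum_list Ms' + add_mset y (Ms ! k - {#y#}) = sum_list Ms + (Ms ! k - {#y#})"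
    using sum_list_list_update[OF k(1)] k(2) by (simp add: Ms'_def)
  then have "add_mset y (sum_list Ms') = sum_list Ms" by simp
  then have "sum_list Ms' = mset ys" using Cons.prems by simp
  from Cons.IH[OF this] obtain g where g: "set g \<subseteq> {0..<length Ms}" "length g = length ys"
    and parts: "Ms' = map (labelled_part ys g) [0..<length Ms]"
    by (auto simp: Ms'_def)
  have Ms_k: "Ms ! k = add_mset y (Ms' ! k)"
    using k by (metis Ms'_def insert_DiffM nth_list_update_eq)
  have "Ms = map (labelled_part (y # ys) (k # g)) [0..<length Ms]"
  proof (rule nth_equalityI)
    fix i assume i: "i < length Ms"
    have "Ms ! i = (if i = k then add_mset y (Ms' ! i) else Ms' ! i)"
      using Ms_k by (simp add: Ms'_def)
    also have "\<dots> = labelled_part (y # ys) (k # g) i"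
      using parts i by (simp add: labelled_part_Cons)
    finally show "Ms ! i = map (labelled_part (y # ys) (k # g)) [0..<length Ms] ! i"
      using i by simp
  qed simp
  then show ?case using g k(1) by (intro exI[of _ "k # g"]) auto
qed

lemma ordered_splittings_subset_labellings:
  "{Ms. length Ms = n \<and> sum_list Ms = mset ys}
     \<subseteq> (\<lambda>g. map (labelled_part ys g) [0..<n]) ` {g. set g \<subseteq> {0..<n} \<and> length g = length ys}"
proof
  fix Ms assume "Ms \<in> {Ms. length Ms = n \<and> sum_list Ms = mset ys}"
  then show "Ms \<in> (\<lambda>g. map (labelled_part ys g) [0..<n]) `
      {g. set g \<subseteq> {0..<n} \<and> length g = length ys}"
    using sum_list_eq_mset_imp_labelling[of Ms ys] by auto
qed

lemma finite_ordered_splittings: "finite {Ms. length Ms = n \<and> sum_list Ms = mset ys}"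
  by (rule finite_subset[OF ordered_splittings_subset_labellings])
    (simp add: finite_lists_length_eq)

lemma card_ordered_splittings_le:
  "card {Ms. length Ms = n \<and> sum_list Ms = mset ys} \<le> n ^ length ys"
proof -
  let ?L = "{g. set g \<subseteq> {0..<n} \<and> length g = length ys}"
  have "finite ?L" by (simp add: finite_lists_length_eq)
  then have "card {Ms. length Ms = n \<and> sum_list Ms = mset ys}
      \<le> card ((\<lambda>g. map (labelled_part ys g) [0..<n]) ` ?L)"
    by (intro card_mono finite_imageI ordered_splittings_subset_labellings)
  also have "\<dots> \<le> card ?L" by (rule card_image_le) fact
  also have "card ?L = n ^ length ys" by (simp add: card_lists_length_eq)
  finally show ?thesis .
qed

lemma set_pmf_encs:
  "set_pmf (encs E xs) = {es. length es = length xs \<and> (\<forall>i<length xs. es ! i \<in> set_pmf (E (xs ! i)))}"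
proof (induction xs)
  case Nil then show ?case by (auto simp: length_0_conv)
next
  case (Cons x xs)
  have "set_pmf (encs E (x # xs)) = {e # es |e es. e \<in> set_pmf (E x) \<and> es \<in> set_pmf (encs E xs)}"
    by auto
  also have "\<dots> = {es. length es = length (x # xs) \<and>
      (\<forall>i<length (x # xs). es ! i \<in> set_pmf (E ((x # xs) ! i)))}"
    unfolding Cons.IH by (auto simp: nth_Cons length_Suc_conv split: nat.splits)
  finally show ?case .
qed

lemma permute_list_by_eq_permute_list: "permute_list_by = permute_list"
  by (simp add: fun_eq_iff permute_list_by_def permute_list_def)

lemma set_pmf_shuffledE:
  assumes "ys \<in> set_pmf (shuffled n m E xs)" and "length ys = n * m"
  obtains es where "es \<in> set_pmf (encs E xs)" and "mset (concat es) = mset ys"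
proof -
  have "finite {p. p permutes {0..<n * m}}" by (simp add: finite_permutations)
  moreover have "{p. p permutes {0..<n * m}} \<noteq> {}" using permutes_id by blast
  ultimately obtain es p where es: "es \<in> set_pmf (encs E xs)" and p: "p permutes {..<n * m}"
    and ys: "ys = permute_list p (concat es)"
    using assms(1)
    by (auto simp: shuffled_def set_pmf_of_set permute_list_by_eq_permute_list atLeast0LessThan)
  have "length (concat es) = n * m" using ys assms(2) by simp
  then have "mset ys = mset (concat es)" using p ys by simp
  with es that show ?thesis by simp
qed

lemma aggregation_protocol_output:
  assumes "is_aggregation_protocol n m l Enc A"
    and "length xs = n" and "es \<in> set_pmf (encs Enc xs)"
    and "mset (concat es) = mset ys" and "length ys = n * m"
  shows "A ys = sum_list xs"
proof -
  obtain p where p: "p permutes {..<length (concat es)}" and ys: "permute_list p (concat es) = ys"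
    using mset_eq_permutation[OF assms(4)[symmetric]] by blast
  have "length (concat es) = n * m" using assms(4,5) by (metis mset_eq_length)
  with p have "p permutes {0..<n * m}" by (simp add: atLeast0LessThan)
  with assms(1-3) ys show ?thesis
    by (auto simp: is_aggregation_protocol_def set_pmf_encs permute_list_by_eq_permute_list)
qed

lemma aggregation_protocol_inputs_eq_if_message_multisets_eq:
  fixes xs xs' :: "'a::field list"
  assumes protocol: "is_aggregation_protocol n m l Enc A" and "length ys = n * m"
    and xs: "length xs = n" "es \<in> set_pmf (encs Enc xs)" "mset (concat es) = mset ys"
    and xs': "length xs' = n" "es' \<in> set_pmf (encs Enc xs')"
    and same_parts: "map mset es = map mset es'"
  shows "xs = xs'"
proof (rule nth_equalityI)
  show "length xs = length xs'" using xs xs' by simp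
  fix k assume k: "k < length xs"
  define zs where "zs = xs[k := xs' ! k]"
  define fs where "fs = es[k := es' ! k]"
  have "fs \<in> set_pmf (encs Enc zs)"
    using xs(1,2) xs'(1,2) k by (auto simp: set_pmf_encs zs_def fs_def nth_list_update)
  moreover have "mset (concat fs) = mset ys"
  proof -
    have "length es = length es'" and "k < length es"
      using xs xs' k by (auto simp: set_pmf_encs)
    then have "mset (es' ! k) = mset (es ! k)" using same_parts by (metis nth_map)
    then show ?thesis
      unfolding fs_def using \<open>k < length es\<close> xs(3) by (simp add: mset_concat_list_update)
  qed
  ultimately have "A ys = sum_list zs"
    using aggregation_protocol_output[OF protocol] xs(1) \<open>length ys = n * m\<close>
    by (simp add: zs_def)
  moreover have "A ys = sum_list xs"
    using aggregation_protocol_output[OF protocol xs] \<open>length ys = n * m\<close> .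
  ultimately have "sum_list xs + xs' ! k = sum_list xs + xs ! k"
    using sum_list_list_update[OF k, of "xs' ! k"] by (simp add: zs_def add.commute)
  then show "xs ! k = xs' ! k" by simp
qed

theorem mainTheorem12:
  fixes n m l :: nat
    and s :: "'a::{finite, field}"
    and Enc :: "'a \<Rightarrow> nat list pmf"
    and A :: "nat list \<Rightarrow> 'a"
    and y :: "nat list"
  assumes "n \<ge> 1"
    and "is_aggregation_protocol n m l Enc A"
    and "length y = n * m" and "set y \<subseteq> {1..l}"
  shows "card {x \<in> B_set n s. pmf (shuffled n m Enc x) y > 0} \<le> n ^ (n * m)"
proof -
  define Inv where "Inv = {x \<in> B_set n s. pmf (shuffled n m Enc x) y > 0}"
  define explains
    where "explains x es \<longleftrightarrow> es \<in> set_pmf (encs Enc x) \<and> mset (concat es) = mset y" for x es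
  define E where "E x = (SOME es. explains x es)" for x
  have Inv: "length x = n \<and> explains x (E x)" if "x \<in> Inv" for x
  proof -
    have "y \<in> set_pmf (shuffled n m Enc x)" "length x = n"
      using that by (auto simp: Inv_def B_set_def set_pmf_iff)
    with set_pmf_shuffledE[OF _ assms(3)] show ?thesis
      unfolding E_def explains_def by (metis (mono_tags, lifting) someI)
  qed
  have "inj_on (\<lambda>x. map mset (E x)) Inv"
    using aggregation_protocol_inputs_eq_if_message_multisets_eq[OF assms(2,3)] Inv
    unfolding explains_def by (intro inj_onI) blast
  moreover have "(\<lambda>x. map mset (E x)) ` Inv \<subseteq> {Ms. length Ms = n \<and> sum_list Ms = mset y}"
    using Inv by (auto simp: explains_def set_pmf_encs mset_concat)
  ultimately have "card Inv \<le> card {Ms :: nat multiset list. length Ms = n \<and> sum_list Ms = mset y}"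
    using finite_ordered_splittings by (rule card_inj_on_le)
  also have "\<dots> \<le> n ^ (n * m)" using card_ordered_splittings_le[of n y] assms(3) by simp
  finally show ?thesis unfolding Inv_def .
qed

end
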